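(* Let $(X,d)$, $\mathcal{R}$, $p$, $T$, $Y$ and $\lambda$ satisfy all hypotheses (1)–(4) of the following fixed point theorem: $(X,d)$ is a metric space, $\mathcal{R}$ a binary relation on $X$, $p$ a $w$-distance with respect to $\mathcal{R}$, $T:X\to X$, and (1) there is $Y\subseteq X$ with $T(X)\subseteq Y$ and $(Y,d)$ $\mathcal{R}$-complete; (2) $X(T,\mathcal{R})\ne\emptyset$ and $\mathcal{R}$ is $T$-closed; (3) $T$ is $\mathcal{R}$-continuous or $\mathcal{R}|_Y$ is $d$-self-closed; (4) there is $\lambda\in[0,1)$ with $p(Tx,Ty)\le\lambda p(x,y)$ whenever $(x,y)\in\mathcal{R}$. Suppose in addition that at least one of the following holds: (a) for every $x,y\in T(X)$ there exists $z\in T(X)$ such that $(z,x)\in\mathcal{R}$ and $(z,y)\in\mathcal{R}$; (b) $\mathcal{R}|_{T(X)}$ is complete, i.e. for all $x,y\in T(X)$, $(x,y)\in\mathcal{R}$ or $(y,x)\in\mathcal{R}$. Then $T$ has a unique fixed point.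
   Context: A sequence $(x_n)$ is $\mathcal{R}$-preserving if $(x_n,x_{n+1})\in\mathcal{R}$ for all $n\ge0$. $(Y,d)$ is $\mathcal{R}$-complete if every $\mathcal{R}$-preserving Cauchy sequence in $Y$ converges in $Y$. $X(T,\mathcal{R})=\{x\in X:(x,Tx)\in\mathcal{R}\}$. $\mathcal{R}$ is $T$-closed if $(x,y)\in\mathcal{R}\Rightarrow(Tx,Ty)\in\mathcal{R}$. $T$ is $\mathcal{R}$-continuous if $Tx_n\to Tx$ for every $\mathcal{R}$-preserving sequence $x_n\to x$. $\mathcal{R}|_Y=\mathcal{R}\cap(Y\times Y)$ is $d$-self-closed if every $\mathcal{R}|_Y$-preserving sequence $x_n\to x$ has a subsequence with $(x_{n_k},x)\in\mathcal{R}|_Y$ for all $k$. A function $g$ is $\mathcal{R}$-lower semi-continuous at $x$ if $\liminf_n g(x_n)\ge g(x)$ for every $\mathcal{R}$-preserving sequence $x_n\to x$. A $w$-distance with respect to $\mathcal{R}$ is $p:X\times X\to[0,\infty)$ with: (w1') $p(x,z)\le p(x,y)+p(y,z)$; (w2') each $p(x,\cdot)$ is $\mathcal{R}$-lower semi-continuous; (w3') for every $\epsilon>0$ there is $\delta>0$ such that $p(z,x)\le\delta$ and $p(z,y)\le\delta$ imply $d(x,y)\le\epsilon$. *)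

theory Defs
  imports "HOL-Analysis.Analysis"
begin

definition R_preserving :: "('a \<times> 'a) set \<Rightarrow> (nat \<Rightarrow> 'a) \<Rightarrow> bool" where
  "R_preserving R x \<longleftrightarrow> (\<forall>n. (x n, x (Suc n)) \<in> R)"

definition restrict_rel :: "('a \<times> 'a) set \<Rightarrow> 'a set \<Rightarrow> ('a \<times> 'a) set" where
  "restrict_rel R Y = R \<inter> (Y \<times> Y)"

definition R_complete :: "'a::metric_space set \<Rightarrow> ('a \<times> 'a) set \<Rightarrow> bool" where
  "R_complete Y R \<longleftrightarrow>
     (\<forall>x. (\<forall>n. x n \<in> Y) \<longrightarrow> R_preserving R x \<longrightarrow> Cauchy x \<longrightarrow> (\<exists>l\<in>Y. x \<longlonglongrightarrow> l))"

definition fix_set_rel :: "('a \<Rightarrow> 'a) \<Rightarrow> ('a \<times> 'a) set \<Rightarrow> 'a set" where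
  "fix_set_rel T R = {x. (x, T x) \<in> R}"

definition T_closed :: "('a \<times> 'a) set \<Rightarrow> ('a \<Rightarrow> 'a) \<Rightarrow> bool" where
  "T_closed R T \<longleftrightarrow> (\<forall>x y. (x, y) \<in> R \<longrightarrow> (T x, T y) \<in> R)"

definition R_continuous :: "('a \<times> 'a) set \<Rightarrow> ('a::metric_space \<Rightarrow> 'a) \<Rightarrow> bool" where
  "R_continuous R T \<longleftrightarrow>
     (\<forall>x l. R_preserving R x \<longrightarrow> x \<longlonglongrightarrow> l \<longrightarrow> (\<lambda>n. T (x n)) \<longlonglongrightarrow> T l)"

definition d_self_closed :: "('a::metric_space \<times> 'a) set \<Rightarrow> bool" where
  "d_self_closed S \<longleftrightarrow>
     (\<forall>x l. R_preserving S x \<longrightarrow> x \<longlonglongrightarrow> l \<longrightarrow>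
        (\<exists>r::nat\<Rightarrow>nat. strict_mono r \<and> (\<forall>k. (x (r k), l) \<in> S)))"

definition R_lsc :: "('a \<times> 'a) set \<Rightarrow> ('a::metric_space \<Rightarrow> real) \<Rightarrow> 'a \<Rightarrow> bool" where
  "R_lsc R g l \<longleftrightarrow>
     (\<forall>x. R_preserving R x \<longrightarrow> x \<longlonglongrightarrow> l \<longrightarrow>
        ereal (g l) \<le> liminf (\<lambda>n. ereal (g (x n))))"

definition w_distance :: "('a \<times> 'a) set \<Rightarrow> ('a::metric_space \<Rightarrow> 'a \<Rightarrow> real) \<Rightarrow> bool" where
  "w_distance R p \<longleftrightarrow>
     (\<forall>x y. 0 \<le> p x y) \<and>
     (\<forall>x y z. p x z \<le> p x y + p y z) \<and>
     (\<forall>x l. R_lsc R (p x) l) \<and>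
     (\<forall>\<epsilon>>0. \<exists>\<delta>>0. \<forall>x y z. p z x \<le> \<delta> \<longrightarrow> p z y \<le> \<delta> \<longrightarrow> dist x y \<le> \<epsilon>)"

end

theory Submission
  imports Defs
begin

text \<open>
  The orbit of a point x0 with (x0, T x0) \<in> R stays R-related (R is T-closed), so the
  contraction gives p(T^n x0, T^(n+1) x0) \<le> \<lambda>^n p(x0, T x0) and, summing, the geometric
  bound p(T^n x0, T^m x0) \<le> \<lambda>^n p(x0, T x0) / (1 - \<lambda>) for n < m. Axiom (w3') turns
  such bounds, which tend to 0 uniformly from a common first point, into the Cauchy property
  and into equality of points; the limit is a fixed point either by R-continuity of T or,
  via R-lower semicontinuity of p, by self-closedness of R on Y. For uniqueness, two fixed
  points with a common R-predecessor z are both approached in p by the iterates of z.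
\<close>

lemma w_distance_eqI:
  assumes "w_distance R p"
    and "\<And>\<delta>. \<delta> > 0 \<Longrightarrow> \<exists>z. p z x \<le> \<delta> \<and> p z y \<le> \<delta>"
  shows "x = y"
proof (rule ccontr)
  assume "x \<noteq> y"
  then have e: "dist x y / 2 > 0" by simp
  obtain \<delta> where "\<delta> > 0" and \<delta>: "\<And>a b c. p c a \<le> \<delta> \<Longrightarrow> p c b \<le> \<delta> \<Longrightarrow> dist a b \<le> dist x y / 2"
    using assms(1) e unfolding w_distance_def by meson
  then obtain z where "p z x \<le> \<delta>" "p z y \<le> \<delta>" using assms(2) by blast
  with \<delta> have "dist x y \<le> dist x y / 2" by blast
  with e show False by simp
qed

lemma w_distance_Cauchy:
  assumes "w_distance R p"
    and bound: "\<And>n m. n < m \<Longrightarrow> p (x n) (x m) \<le> B n"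
    and "B \<longlonglongrightarrow> 0"
  shows "Cauchy x"
  unfolding Cauchy_def
proof (intro allI impI)
  fix e :: real assume "e > 0"
  then obtain \<delta> where "\<delta> > 0" and \<delta>: "\<And>a b c. p c a \<le> \<delta> \<Longrightarrow> p c b \<le> \<delta> \<Longrightarrow> dist a b \<le> e / 2"
    using assms(1) unfolding w_distance_def by (meson half_gt_zero)
  obtain N where "B N < \<delta>"
    using order_tendstoD(2)[OF assms(3) \<open>\<delta> > 0\<close>] eventually_sequentially by auto
  show "\<exists>M. \<forall>m\<ge>M. \<forall>n\<ge>M. dist (x m) (x n) < e"
  proof (intro exI allI impI)
    fix m n assume "Suc N \<le> m" "Suc N \<le> n"
    then have "p (x N) (x m) \<le> \<delta>" "p (x N) (x n) \<le> \<delta>"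
      using bound[of N m] bound[of N n] \<open>B N < \<delta>\<close> by auto
    with \<delta> \<open>e > 0\<close> show "dist (x m) (x n) < e" by fastforce
  qed
qed

lemma R_lsc_le:
  assumes "R_lsc R g u" "R_preserving R x" "x \<longlonglongrightarrow> u"
    and "eventually (\<lambda>n. g (x n) \<le> b) sequentially"
  shows "g u \<le> b"
proof -
  have "ereal (g u) \<le> liminf (\<lambda>n. ereal (g (x n)))"
    using assms(1-3) unfolding R_lsc_def by blast
  also have "\<dots> \<le> liminf (\<lambda>n. ereal b)"
    using assms(4) by (intro Liminf_mono) (simp add: eventually_mono)
  also have "\<dots> = ereal b" by (simp add: Liminf_const)
  finally show ?thesis by simp
qed

locale w_contraction =
  fixes R :: "('a::metric_space \<times> 'a) set"
    and p :: "'a \<Rightarrow> 'a \<Rightarrow> real"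
    and T :: "'a \<Rightarrow> 'a"
    and lam :: real
  assumes w_distance: "w_distance R p"
    and T_closed: "T_closed R T"
    and lam_nonneg: "0 \<le> lam" and lam_less_1: "lam < 1"
    and contraction: "\<And>x y. (x, y) \<in> R \<Longrightarrow> p (T x) (T y) \<le> lam * p x y"
begin

lemma p_nonneg: "0 \<le> p x y"
  using w_distance unfolding w_distance_def by blast

lemma p_triangle: "p x z \<le> p x y + p y z"
  using w_distance unfolding w_distance_def by blast

lemma related_T: "(x, y) \<in> R \<Longrightarrow> (T x, T y) \<in> R"
  using T_closed unfolding T_closed_def by blast

lemma power_mult_tendsto_0: "(\<lambda>n. lam ^ n * C) \<longlonglongrightarrow> 0"
  using lam_nonneg lam_less_1 by (intro tendsto_mult_left_zero LIMSEQ_power_zero) simp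

lemma iterate_to_fixed_point:
  assumes "(z, w) \<in> R" "T w = w"
  shows "((T ^^ n) z, w) \<in> R \<and> p ((T ^^ n) z) w \<le> lam ^ n * p z w"
proof (induction n)
  case 0
  show ?case using assms(1) by simp
next
  case (Suc n)
  then have "((T ^^ n) z, w) \<in> R" by blast
  from related_T[OF this] contraction[OF this] have
    "(T ((T ^^ n) z), T w) \<in> R" "p (T ((T ^^ n) z)) (T w) \<le> lam * p ((T ^^ n) z) w" .
  moreover have "lam * p ((T ^^ n) z) w \<le> lam * (lam ^ n * p z w)"
    using Suc lam_nonneg by (intro mult_left_mono) auto
  ultimately show ?case using assms(2) by simp
qed

lemma fixed_points_with_common_predecessor_eq:
  assumes "(z, u) \<in> R" "(z, v) \<in> R" "T u = u" "T v = v"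
  shows "u = v"
proof (rule w_distance_eqI[OF w_distance])
  fix \<delta> :: real assume "\<delta> > 0"
  have "eventually (\<lambda>n. lam ^ n * (p z u + p z v) < \<delta>) sequentially"
    using order_tendstoD(2)[OF power_mult_tendsto_0 \<open>\<delta> > 0\<close>] .
  then obtain n where n: "lam ^ n * (p z u + p z v) < \<delta>"
    unfolding eventually_sequentially by (meson order_refl)
  have "p ((T ^^ n) z) u \<le> lam ^ n * p z u" "p ((T ^^ n) z) v \<le> lam ^ n * p z v"
    using iterate_to_fixed_point assms by blast+
  moreover have "lam ^ n * p z u \<le> lam ^ n * (p z u + p z v)" "lam ^ n * p z v \<le> lam ^ n * (p z u + p z v)"
    using lam_nonneg p_nonneg by (auto intro: mult_left_mono)
  ultimately show "\<exists>w. p w u \<le> \<delta> \<and> p w v \<le> \<delta>"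
    using n by (intro exI[of _ "(T ^^ n) z"]) linarith
qed

context
  fixes x0 :: 'a
  assumes start: "(x0, T x0) \<in> R"
begin

lemma orbit_related: "((T ^^ n) x0, (T ^^ Suc n) x0) \<in> R"
  by (induction n) (use start related_T in auto)

lemma orbit_R_preserving: "R_preserving R (\<lambda>n. (T ^^ n) x0)"
  unfolding R_preserving_def using orbit_related by blast

lemma orbit_step_bound: "p ((T ^^ n) x0) ((T ^^ Suc n) x0) \<le> lam ^ n * p x0 (T x0)"
proof (induction n)
  case 0
  show ?case by simp
next
  case (Suc n)
  have "p ((T ^^ Suc n) x0) ((T ^^ Suc (Suc n)) x0) \<le> lam * p ((T ^^ n) x0) ((T ^^ Suc n) x0)"
    using contraction[OF orbit_related[of n]] by simp
  also have "\<dots> \<le> lam * (lam ^ n * p x0 (T x0))"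
    using Suc lam_nonneg by (intro mult_left_mono)
  finally show ?case by simp
qed

definition orbit_bound :: "nat \<Rightarrow> real" where
  "orbit_bound n = lam ^ n * (p x0 (T x0) / (1 - lam))"

lemma orbit_bound_tendsto_0: "orbit_bound \<longlonglongrightarrow> 0"
  unfolding orbit_bound_def by (rule power_mult_tendsto_0)

lemma orbit_bound_Suc: "orbit_bound (Suc n) = lam * orbit_bound n"
  unfolding orbit_bound_def by simp

lemma orbit_geometric_bound:
  assumes "n < m"
  shows "p ((T ^^ n) x0) ((T ^^ m) x0) \<le> orbit_bound n"
proof -
  define a where "a = p x0 (T x0)"
  define C where "C = a / (1 - lam)"
  have a: "a = C * (1 - lam)" unfolding C_def using lam_less_1 by simp
  have partial: "p ((T ^^ n) x0) ((T ^^ (n + Suc k)) x0) \<le> lam ^ n * C * (1 - lam ^ Suc k)" for k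
  proof (induction k)
    case 0
    have "p ((T ^^ n) x0) ((T ^^ Suc n) x0) \<le> lam ^ n * a"
      using orbit_step_bound unfolding a_def .
    also have "\<dots> = lam ^ n * C * (1 - lam ^ Suc 0)" unfolding a by simp
    finally show ?case by simp
  next
    case (Suc k)
    have "p ((T ^^ n) x0) ((T ^^ (n + Suc (Suc k))) x0)
        \<le> p ((T ^^ n) x0) ((T ^^ (n + Suc k)) x0) + p ((T ^^ (n + Suc k)) x0) ((T ^^ Suc (n + Suc k)) x0)"
      using p_triangle by simp
    also have "\<dots> \<le> lam ^ n * C * (1 - lam ^ Suc k) + lam ^ (n + Suc k) * a"
      using Suc orbit_step_bound[of "n + Suc k"] unfolding a_def by linarith
    also have "\<dots> = lam ^ n * C * (1 - lam ^ Suc (Suc k))"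
      unfolding a by (simp add: algebra_simps power_add)
    finally show ?case .
  qed
  have "0 \<le> C" unfolding C_def a_def using p_nonneg lam_less_1 by simp
  then have "lam ^ n * C * (1 - lam ^ Suc (m - n - 1)) \<le> lam ^ n * C"
    using lam_nonneg by (simp add: mult_left_le)
  with partial[of "m - n - 1"] assms show ?thesis
    unfolding orbit_bound_def C_def a_def by simp
qed

lemma orbit_Cauchy: "Cauchy (\<lambda>n. (T ^^ n) x0)"
  using w_distance_Cauchy[OF w_distance orbit_geometric_bound orbit_bound_tendsto_0] .

lemma orbit_limit_fixed_if_R_continuous:
  assumes "R_continuous R T" "(\<lambda>n. (T ^^ n) x0) \<longlonglongrightarrow> u"
  shows "T u = u"
proof -
  have "(\<lambda>n. T ((T ^^ n) x0)) \<longlonglongrightarrow> T u"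
    using assms orbit_R_preserving unfolding R_continuous_def by blast
  moreover have "(\<lambda>n. T ((T ^^ n) x0)) \<longlonglongrightarrow> u"
    using LIMSEQ_Suc[OF assms(2)] by simp
  ultimately show ?thesis using LIMSEQ_unique by blast
qed

lemma orbit_to_limit_bound:
  assumes "(\<lambda>n. (T ^^ n) x0) \<longlonglongrightarrow> u"
  shows "p ((T ^^ n) x0) u \<le> orbit_bound n"
proof (rule R_lsc_le[OF _ orbit_R_preserving assms])
  show "R_lsc R (p ((T ^^ n) x0)) u"
    using w_distance unfolding w_distance_def by blast
  show "\<forall>\<^sub>F m in sequentially. p ((T ^^ n) x0) ((T ^^ m) x0) \<le> orbit_bound n"
    unfolding eventually_sequentially using orbit_geometric_bound by (intro exI[of _ "Suc n"]) auto
qed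

text \<open>
  At the indices where the orbit is R-related to the limit u, the contraction carries the
  bound on p(T^n x0, u) over to p(T^(n+1) x0, T u); so T u and u are both p-close to the
  same iterate.
\<close>
lemma orbit_limit_fixed_if_self_closed:
  assumes "d_self_closed (restrict_rel R Y)" "\<And>n. (T ^^ n) x0 \<in> Y"
    and lim: "(\<lambda>n. (T ^^ n) x0) \<longlonglongrightarrow> u"
  shows "T u = u"
proof (rule w_distance_eqI[OF w_distance])
  have "R_preserving (restrict_rel R Y) (\<lambda>n. (T ^^ n) x0)"
    using orbit_related assms(2) unfolding R_preserving_def restrict_rel_def by blast
  then obtain r :: "nat \<Rightarrow> nat" where "strict_mono r" and r: "\<And>k. ((T ^^ r k) x0, u) \<in> R"
    using assms(1) lim unfolding d_self_closed_def restrict_rel_def by blast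
  fix \<delta> :: real assume "\<delta> > 0"
  then obtain N where N: "\<And>n. n \<ge> N \<Longrightarrow> orbit_bound n \<le> \<delta>"
    using order_tendstoD(2)[OF orbit_bound_tendsto_0] eventually_sequentially
    by (metis less_imp_le)
  define n where "n = r N"
  have "N \<le> n" unfolding n_def using seq_suble[OF \<open>strict_mono r\<close>] by simp
  have "p ((T ^^ Suc n) x0) (T u) \<le> lam * p ((T ^^ n) x0) u"
    using contraction[OF r[of N]] unfolding n_def by simp
  also have "\<dots> \<le> lam * orbit_bound n"
    using orbit_to_limit_bound[OF lim] lam_nonneg by (intro mult_left_mono)
  also have "\<dots> \<le> \<delta>" using N[of "Suc n"] \<open>N \<le> n\<close> orbit_bound_Suc by simp
  finally have "p ((T ^^ Suc n) x0) (T u) \<le> \<delta>" .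
  moreover have "p ((T ^^ Suc n) x0) u \<le> \<delta>"
    using orbit_to_limit_bound[OF lim, of "Suc n"] N[of "Suc n"] \<open>N \<le> n\<close> by simp
  ultimately show "\<exists>z. p z (T u) \<le> \<delta> \<and> p z u \<le> \<delta>" by blast
qed

end

lemma fixed_point_exists:
  assumes "range T \<subseteq> Y" "R_complete Y R" "fix_set_rel T R \<noteq> {}"
    and "R_continuous R T \<or> d_self_closed (restrict_rel R Y)"
  shows "\<exists>u. T u = u"
proof -
  obtain x0 where "(x0, T x0) \<in> R" using assms(3) unfolding fix_set_rel_def by blast
  define x1 where "x1 = T x0"
  have start: "(x1, T x1) \<in> R" unfolding x1_def using related_T[OF \<open>(x0, T x0) \<in> R\<close>] .
  have in_Y: "(T ^^ n) x1 \<in> Y" for n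
    using assms(1) unfolding x1_def by (metis funpow_swap1 range_subsetD)
  then obtain u where "(\<lambda>n. (T ^^ n) x1) \<longlonglongrightarrow> u"
    using assms(2)[unfolded R_complete_def, rule_format, OF _ orbit_R_preserving[OF start]
        orbit_Cauchy[OF start]] by blast
  then have "T u = u"
    using assms(4) orbit_limit_fixed_if_R_continuous[OF start]
      orbit_limit_fixed_if_self_closed[OF start _ in_Y] by blast
  then show ?thesis by blast
qed

end

theorem theorem2p2:
  fixes R :: "('a::metric_space \<times> 'a) set"
    and p :: "'a \<Rightarrow> 'a \<Rightarrow> real"
    and T :: "'a \<Rightarrow> 'a"
    and Y :: "'a set"
    and lam :: real
  assumes wd: "w_distance R p"
    and h1: "range T \<subseteq> Y" "R_complete Y R"
    and h2: "fix_set_rel T R \<noteq> {}" "T_closed R T"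
    and h3: "R_continuous R T \<or> d_self_closed (restrict_rel R Y)"
    and h4: "0 \<le> lam" "lam < 1" "\<And>x y. (x, y) \<in> R \<Longrightarrow> p (T x) (T y) \<le> lam * p x y"
    and hab: "(\<forall>x\<in>range T. \<forall>y\<in>range T. \<exists>z\<in>range T. (z, x) \<in> R \<and> (z, y) \<in> R)
              \<or> (\<forall>x\<in>range T. \<forall>y\<in>range T. (x, y) \<in> R \<or> (y, x) \<in> R)"
  shows "\<exists>!x. T x = x"
proof -
  interpret w_contraction R p T lam
    using wd h2(2) h4 by unfold_locales
  obtain u where u: "T u = u" using fixed_point_exists[OF h1 h2(1) h3] by blast
  moreover have "v = u" if v: "T v = v" for v
  proof -
    have "u \<in> range T" "v \<in> range T" using u v by (metis rangeI)+
    \<comment> \<open>In case (b) a fixed point is R-related to itself, so the R-lower one of u, v is a common predecessor.\<close>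
    then obtain z where "(z, v) \<in> R" "(z, u) \<in> R" using hab by blast
    then show "v = u" using fixed_points_with_common_predecessor_eq u v by blast
  qed
  ultimately show ?thesis by blast
qed

end
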